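(* Let $r>0$ and $x,y\in\mathbb{R}^2$ with $d:=\|x-y\|>r$. Let $p_1,p_2$ be the two intersection points of the circles $\partial B(x,r)$ and $\partial B(y,d)$. Then $W(x,y;r)=B(p_1,r)\cap B(p_2,r)$.
   Context: $B(z,\rho)=\{w\in\mathbb{R}^2:\|z-w\|\le\rho\}$ is the closed Euclidean ball. For $x,y\in\mathbb{R}^2$ and $r>0$, $W(x,y;r):=\{z\in\mathbb{R}^2: B(z,r)\supseteq B(x,r)\cap B(y,\|x-y\|)\}$. *)

theory Defs
  imports "HOL-Analysis.Analysis"
begin

definition W :: "real^2 \<Rightarrow> real^2 \<Rightarrow> real \<Rightarrow> (real^2) set" where
  "W x y r = {z. cball x r \<inter> cball y (dist x y) \<subseteq> cball z r}"

end

theory Submission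
  imports Defs
begin

text \<open>
  Every \<open>z \<in> W x y r\<close> lies within \<open>r\<close> of \<open>p1\<close> and \<open>p2\<close>,
  since both points belong to the "half-moon" \<open>B(x,r) \<inter> B(y,d)\<close>.  For the converse
  we use the point \<open>x' = p1 + p2 - x\<close>, the reflection of \<open>x\<close> in the common chord:
  \<^item> \<open>x, p1, x', p2\<close> form a rhombus of side \<open>r\<close>, and \<open>x'\<close> lies on the segment from
    \<open>x\<close> to \<open>y\<close>, namely \<open>x' = x + (r/d)\<^sup>2 (y - x)\<close>;
  \<^item> by a convexity identity the half-moon is contained in \<open>B(x',r)\<close>;
  \<^item> in a planar rhombus of side \<open>r\<close>, every point of the lens \<open>B(p1,r) \<inter> B(p2,r)\<close>
    is within \<open>r\<close> of every point of the lens \<open>B(x,r) \<inter> B(x',r)\<close>: with the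
    rhombus centred at the origin and half-diagonals \<open>a \<perp> b\<close>, the quantity
    \<open>r\<^sup>2 - |z - w|\<^sup>2\<close> is a convex combination of the four slacks
    \<open>r\<^sup>2 - |z \<mp> a|\<^sup>2\<close>, \<open>r\<^sup>2 - |w \<mp> b|\<^sup>2\<close>.
  The only genuinely two-dimensional ingredient is the expansion of a vector in an
  orthogonal basis \<open>{c, e}\<close> of the plane.
\<close>

lemma orthogonal_decomposition_2:
  fixes v c e :: "real^2"
  assumes ce: "c \<bullet> e = 0" and "c \<noteq> 0" and "e \<noteq> 0"
  shows "v = ((v \<bullet> c) / (c \<bullet> c)) *\<^sub>R c + ((v \<bullet> e) / (e \<bullet> e)) *\<^sub>R e"
proof -
  have pos: "c \<bullet> c \<noteq> 0" "e \<bullet> e \<noteq> 0" using assms by auto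
  have orth: "c$1 * e$1 + c$2 * e$2 = 0" using ce by (simp add: inner_vec_def sum_2)
  text \<open>Each coordinate identity is a polynomial consequence of orthogonality;
    the second coordinate is the first one with the two indices swapped.\<close>
  have coord: "v1 * ((c1*c1 + c2*c2) * (e1*e1 + e2*e2))
      = (v1*c1 + v2*c2) * (e1*e1 + e2*e2) * c1 + (v1*e1 + v2*e2) * (c1*c1 + c2*c2) * e1"
    if "c1 * e1 + c2 * e2 = 0" for v1 v2 c1 c2 e1 e2 :: real
    using that by algebra
  have "v$1 * ((c \<bullet> c) * (e \<bullet> e)) = (v \<bullet> c) * (e \<bullet> e) * c$1 + (v \<bullet> e) * (c \<bullet> c) * e$1"
       "v$2 * ((c \<bullet> c) * (e \<bullet> e)) = (v \<bullet> c) * (e \<bullet> e) * c$2 + (v \<bullet> e) * (c \<bullet> c) * e$2"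
    using coord[OF orth, of "v$1" "v$2"] coord[of "c$2" "e$2" "c$1" "e$1" "v$2" "v$1"] orth
    unfolding inner_vec_def sum_2 inner_real_def by (simp_all add: algebra_simps)
  then show ?thesis using pos by (simp add: vec_eq_iff forall_2 field_simps)
qed

lemma square_expansions:
  fixes u v :: "'a::real_inner"
  shows "(u - v) \<bullet> (u - v) = u \<bullet> u - 2 * (u \<bullet> v) + v \<bullet> v"
    and "(u + v) \<bullet> (u + v) = u \<bullet> u + 2 * (u \<bullet> v) + v \<bullet> v"
  by (simp_all add: inner_diff_left inner_diff_right inner_add_left inner_add_right inner_commute)

text \<open>A lens \<open>B(a,r) \<inter> B(-a,r)\<close> lies in the ball of radius \<open>|b|\<close> about the origin
  when \<open>|a|\<^sup>2 + |b|\<^sup>2 = r\<^sup>2\<close>, so its extent along \<open>b\<close> is at most \<open>|b|\<^sup>2\<close>.\<close>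
lemma lens_extent:
  fixes v a b :: "'a::real_inner"
  assumes "norm (v - a) \<le> r" and "norm (v + a) \<le> r" and "a \<bullet> a + b \<bullet> b = r\<^sup>2"
  shows "\<bar>v \<bullet> b\<bar> \<le> b \<bullet> b"
proof -
  have "(v - a) \<bullet> (v - a) + (v + a) \<bullet> (v + a) \<le> 2 * r\<^sup>2"
    using assms(1,2) by (simp add: norm_le_square)
  then have "v \<bullet> v \<le> b \<bullet> b"
    using assms(3) by (simp add: algebra_simps inner_commute)
  then have "norm v \<le> norm b" by (simp add: norm_eq_sqrt_inner)
  have "\<bar>v \<bullet> b\<bar> \<le> norm v * norm b" by (rule Cauchy_Schwarz_ineq2)
  also have "\<dots> \<le> norm b * norm b" using \<open>norm v \<le> norm b\<close> by (simp add: mult_right_mono)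
  also have "\<dots> = b \<bullet> b" by (simp add: dot_square_norm power2_eq_square)
  finally show ?thesis .
qed

lemma orthogonal_lenses_within_distance:
  fixes z w a b :: "real^2"
  assumes orth: "a \<bullet> b = 0" and "a \<noteq> 0" and "b \<noteq> 0"
    and side: "a \<bullet> a + b \<bullet> b = r\<^sup>2"
    and z: "norm (z - a) \<le> r" "norm (z + a) \<le> r"
    and w: "norm (w - b) \<le> r" "norm (w + b) \<le> r"
  shows "norm (z - w) \<le> r"
proof -
  define \<alpha> where "\<alpha> = (z \<bullet> b) / (b \<bullet> b)"
  define \<beta> where "\<beta> = (w \<bullet> a) / (a \<bullet> a)"
  have "\<bar>z \<bullet> b\<bar> \<le> b \<bullet> b" by (rule lens_extent[OF z side])
  then have \<alpha>: "\<bar>\<alpha>\<bar> \<le> 1" using \<open>b \<noteq> 0\<close> by (simp add: \<alpha>_def abs_divide)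
  have "\<bar>w \<bullet> a\<bar> \<le> a \<bullet> a" by (rule lens_extent[OF w]) (use side in simp)
  then have \<beta>: "\<bar>\<beta>\<bar> \<le> 1" using \<open>a \<noteq> 0\<close> by (simp add: \<beta>_def abs_divide)
  have "z \<bullet> w = z \<bullet> (((w \<bullet> a) / (a \<bullet> a)) *\<^sub>R a + ((w \<bullet> b) / (b \<bullet> b)) *\<^sub>R b)"
    by (rule arg_cong[where f = "inner z"], rule orthogonal_decomposition_2[OF orth \<open>a \<noteq> 0\<close> \<open>b \<noteq> 0\<close>])
  then have zw: "z \<bullet> w = \<beta> * (z \<bullet> a) + \<alpha> * (w \<bullet> b)"
    by (simp add: \<alpha>_def \<beta>_def inner_add_right inner_commute)
  have "r\<^sup>2 - (z - w) \<bullet> (z - w)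
      = (1 + \<beta>) / 2 * (r\<^sup>2 - (z - a) \<bullet> (z - a)) + (1 - \<beta>) / 2 * (r\<^sup>2 - (z + a) \<bullet> (z + a))
      + (1 + \<alpha>) / 2 * (r\<^sup>2 - (w - b) \<bullet> (w - b)) + (1 - \<alpha>) / 2 * (r\<^sup>2 - (w + b) \<bullet> (w + b))"
    unfolding square_expansions side[symmetric] zw by (simp add: field_simps)
  also have "\<dots> \<ge> 0"
    using \<alpha> \<beta> z w by (intro add_nonneg_nonneg mult_nonneg_nonneg) (auto simp: norm_le_square)
  finally have "(z - w) \<bullet> (z - w) \<le> r\<^sup>2" by simp
  moreover have "0 \<le> r" using z(1) norm_ge_zero[of "z - a"] by linarith
  ultimately show ?thesis by (simp add: norm_le_square)
qed

lemma equidistant_orthogonal: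
  fixes u e :: "'a::real_inner"
  assumes "norm (u + e) = norm (u - e)"
  shows "u \<bullet> e = 0"
proof -
  have "(u + e) \<bullet> (u + e) = (u - e) \<bullet> (u - e)" using assms by (simp add: dot_square_norm)
  then show ?thesis by (simp add: square_expansions)
qed

text \<open>The same estimate for a rhombus \<open>x, p1, x', p2\<close> given by its vertices; the
  diagonals are orthogonal because \<open>p1\<close> and \<open>p2\<close> are equidistant from \<open>x\<close>.\<close>
lemma rhombus_lenses_within_distance:
  fixes x x' p1 p2 z w :: "real^2"
  assumes diagonals: "x + x' = p1 + p2" and "x' \<noteq> x" and "p1 \<noteq> p2"
    and "dist p1 x = r" and "dist p2 x = r"
    and z: "z \<in> cball p1 r \<inter> cball p2 r" and w: "w \<in> cball x r \<inter> cball x' r"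
  shows "dist z w \<le> r"
proof -
  define m c e where "m = (1/2) *\<^sub>R (p1 + p2)" and "c = m - x" and "e = (1/2) *\<^sub>R (p1 - p2)"
  have shifted: "(z - m) - e = z - p1" "(z - m) + e = z - p2"
    "(w - m) - c = w - x'" "(w - m) + c = w - x"
    using diagonals by (simp_all add: m_def c_def e_def algebra_simps flip: scaleR_2)
  have zm: "norm ((z - m) - e) \<le> r" "norm ((z - m) + e) \<le> r"
    and wm: "norm ((w - m) - c) \<le> r" "norm ((w - m) + c) \<le> r"
    unfolding shifted using z w by (simp_all add: dist_norm[symmetric] dist_commute)
  have "e + c = p1 - x" "e - c = x - p2"
    by (simp_all add: m_def c_def e_def algebra_simps flip: scaleR_2)
  then have side_r: "norm (e + c) = r" "norm (e - c) = r"
    using assms(4,5) by (simp_all add: dist_norm norm_minus_commute)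
  then have orth: "e \<bullet> c = 0" by (intro equidistant_orthogonal) simp
  have "(e + c) \<bullet> (e + c) = r\<^sup>2" using side_r(1) by (metis power2_norm_eq_inner)
  then have side: "e \<bullet> e + c \<bullet> c = r\<^sup>2" using orth by (simp add: square_expansions)
  have mm: "m + m = p1 + p2" unfolding m_def by (simp flip: scaleR_add_left)
  have "c \<noteq> 0"
  proof
    assume "c = 0"
    then have "x + x' = x + x" using diagonals mm by (simp add: c_def)
    then show False using \<open>x' \<noteq> x\<close> by simp
  qed
  moreover have "e \<noteq> 0" using \<open>p1 \<noteq> p2\<close> by (simp add: e_def)
  ultimately have "norm ((z - m) - (w - m)) \<le> r"
    using orthogonal_lenses_within_distance[OF orth _ _ side zm wm] by blast
  then show ?thesis by (simp add: dist_norm)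
qed

text \<open>The half-moon \<open>B(x,r) \<inter> B(y,|x - y|)\<close> lies in \<open>B(x + \<mu>(y - x), r)\<close> whenever
  \<open>0 \<le> \<mu> \<le> 1\<close> and \<open>\<mu> |x - y|\<^sup>2 \<le> r\<^sup>2\<close>: \<open>|v - \<mu>Y|\<^sup>2\<close> is the convex combination
  \<open>(1-\<mu>)|v|\<^sup>2 + \<mu>|v - Y|\<^sup>2\<close> minus \<open>\<mu>(1-\<mu>)|Y|\<^sup>2\<close>.\<close>
lemma half_moon_in_ball:
  fixes x y w :: "'a::real_inner"
  assumes "0 \<le> \<mu>" "\<mu> \<le> 1" "\<mu> * (dist x y)\<^sup>2 \<le> r\<^sup>2"
    and wx: "dist w x \<le> r" and wy: "dist w y \<le> dist x y"
  shows "dist w (x + \<mu> *\<^sub>R (y - x)) \<le> r"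
proof -
  define v Y where "v = w - x" and "Y = y - x"
  have r: "0 \<le> r" using wx zero_le_dist[of w x] by linarith
  have v: "v \<bullet> v \<le> r\<^sup>2"
    using wx by (simp add: v_def dist_norm norm_le_square)
  have "norm (v - Y) \<le> norm Y"
    using wy by (simp add: v_def Y_def dist_norm norm_minus_commute)
  then have vY: "(v - Y) \<bullet> (v - Y) \<le> Y \<bullet> Y"
    by (simp add: norm_le_square power2_norm_eq_inner)
  have "(v - \<mu> *\<^sub>R Y) \<bullet> (v - \<mu> *\<^sub>R Y)
      = (1 - \<mu>) * (v \<bullet> v) + \<mu> * ((v - Y) \<bullet> (v - Y)) - \<mu> * (1 - \<mu>) * (Y \<bullet> Y)"
    unfolding square_expansions inner_scaleR_left inner_scaleR_right by (simp add: algebra_simps)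
  also have "\<dots> \<le> (1 - \<mu>) * r\<^sup>2 + \<mu> * (Y \<bullet> Y) - \<mu> * (1 - \<mu>) * (Y \<bullet> Y)"
    using assms(1,2) v vY by (intro diff_right_mono add_mono mult_left_mono) auto
  also have "\<dots> = (1 - \<mu>) * r\<^sup>2 + \<mu> * (\<mu> * (dist x y)\<^sup>2)"
    by (simp add: Y_def dist_norm norm_minus_commute power2_norm_eq_inner algebra_simps)
  also have "\<dots> \<le> (1 - \<mu>) * r\<^sup>2 + \<mu> * r\<^sup>2"
    using assms(1,3) by (simp add: mult_left_mono)
  finally have "(v - \<mu> *\<^sub>R Y) \<bullet> (v - \<mu> *\<^sub>R Y) \<le> r\<^sup>2" by (simp add: algebra_simps)
  moreover have "w - (x + \<mu> *\<^sub>R (y - x)) = v - \<mu> *\<^sub>R Y" by (simp add: v_def Y_def)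
  ultimately show ?thesis using r by (simp add: dist_norm norm_le_square)
qed

lemma reflection_across_common_chord:
  fixes x y p1 p2 :: "real^2"
  assumes "r > 0" and "p1 \<noteq> p2"
    and "dist p1 x = r" and "dist p1 y = dist x y"
    and "dist p2 x = r" and "dist p2 y = dist x y"
  shows "p1 + p2 - x = x + (r\<^sup>2 / (dist x y)\<^sup>2) *\<^sub>R (y - x)" and "p1 + p2 - x \<noteq> x"
proof -
  define c e Y where "c = (1/2) *\<^sub>R (p1 + p2) - x" and "e = (1/2) *\<^sub>R (p1 - p2)" and "Y = y - x"
  have x': "p1 + p2 - x = x + 2 *\<^sub>R c" unfolding c_def by (simp add: algebra_simps flip: scaleR_2)
  have p1: "p1 - x = c + e" and p2: "p2 - x = c - e"
    unfolding c_def e_def by (simp_all add: algebra_simps flip: scaleR_2)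
  have p1y: "p1 - y = (c + e) - Y" and p2y: "p2 - y = (c - e) - Y"
    unfolding Y_def by (simp_all flip: p1 p2)
  have ce_r: "norm (c + e) = r" "norm (c - e) = r"
    using assms(3,5) by (simp_all add: dist_norm flip: p1 p2)
  then have ce: "c \<bullet> e = 0" by (intro equidistant_orthogonal) simp
  have "(c - Y) + e = p1 - y" "(c - Y) - e = p2 - y"
    using p1y p2y by (simp_all add: algebra_simps)
  then have "norm ((c - Y) + e) = norm ((c - Y) - e)"
    using assms(4,6) by (simp add: dist_norm)
  then have "(c - Y) \<bullet> e = 0" by (rule equidistant_orthogonal)
  then have eY: "Y \<bullet> e = 0" using ce by (simp add: inner_diff_left)
  have cc_ee: "(c + e) \<bullet> (c + e) = r\<^sup>2" using ce_r(1) by (metis power2_norm_eq_inner)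
  have d: "norm Y = dist x y" by (simp add: Y_def dist_norm norm_minus_commute)
  have "norm ((c + e) - Y) = norm Y" using assms(4) d p1y by (metis dist_norm)
  then have "((c + e) - Y) \<bullet> ((c + e) - Y) = Y \<bullet> Y" by (metis power2_norm_eq_inner)
  then have "2 * ((c + e) \<bullet> Y) = r\<^sup>2"
    unfolding square_expansions(1)[of "c + e"] cc_ee by simp
  then have cY: "c \<bullet> Y = r\<^sup>2 / 2"
    using eY by (simp add: inner_add_left inner_add_right inner_commute)
  then have c0: "c \<noteq> 0" using assms(1) by auto
  have e0: "e \<noteq> 0" using assms(2) by (simp add: e_def)
  define \<kappa> where "\<kappa> = (Y \<bullet> c) / (c \<bullet> c)"
  have Yc: "Y = \<kappa> *\<^sub>R c"
    using orthogonal_decomposition_2[OF ce c0 e0, of Y] eY by (simp add: \<kappa>_def)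
  text \<open>Comparing \<open>c \<bullet> Y\<close> and \<open>Y \<bullet> Y\<close> along \<open>Y = \<kappa> c\<close> determines \<open>\<kappa> = 2 d\<^sup>2 / r\<^sup>2\<close>.\<close>
  have \<kappa>c: "\<kappa> * (c \<bullet> c) = r\<^sup>2 / 2" using cY Yc by (simp add: inner_commute)
  have "(dist x y)\<^sup>2 = Y \<bullet> Y" using d by (metis power2_norm_eq_inner)
  then have "(dist x y)\<^sup>2 = \<kappa> * (\<kappa> * (c \<bullet> c))" by (simp add: Yc)
  then have \<kappa>: "\<kappa> * r\<^sup>2 = 2 * (dist x y)\<^sup>2" using \<kappa>c by simp
  have "\<kappa> \<noteq> 0" using \<kappa>c assms(1) by auto
  then have "(r\<^sup>2 / (dist x y)\<^sup>2) * \<kappa> = 2" using \<kappa> assms(1) by (auto simp: field_simps)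
  then have "2 *\<^sub>R c = (r\<^sup>2 / (dist x y)\<^sup>2) *\<^sub>R (y - x)" by (simp add: Yc flip: Y_def)
  then show "p1 + p2 - x = x + (r\<^sup>2 / (dist x y)\<^sup>2) *\<^sub>R (y - x)"
    unfolding x' by simp
  show "p1 + p2 - x \<noteq> x" using c0 unfolding x' by simp
qed

lemma W_subset_balls:
  assumes "p1 \<in> cball x r \<inter> cball y (dist x y)" and "p2 \<in> cball x r \<inter> cball y (dist x y)"
  shows "W x y r \<subseteq> cball p1 r \<inter> cball p2 r"
proof
  fix z assume "z \<in> W x y r"
  then have "cball x r \<inter> cball y (dist x y) \<subseteq> cball z r" by (simp add: W_def)
  then have "p1 \<in> cball z r" "p2 \<in> cball z r" using assms by blast+
  then show "z \<in> cball p1 r \<inter> cball p2 r" by (simp add: dist_commute)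
qed

theorem mainTheorem10:
  fixes x y p1 p2 :: "real^2" and r :: real
  assumes "r > 0"
    and "dist x y > r"
    and "p1 \<noteq> p2"
    and "dist p1 x = r" and "dist p1 y = dist x y"
    and "dist p2 x = r" and "dist p2 y = dist x y"
  shows "W x y r = cball p1 r \<inter> cball p2 r"
proof
  show "W x y r \<subseteq> cball p1 r \<inter> cball p2 r"
    using assms by (intro W_subset_balls) (auto simp: dist_commute)
next
  define \<mu> where "\<mu> = r\<^sup>2 / (dist x y)\<^sup>2"
  note x' = reflection_across_common_chord[OF assms(1,3-7), folded \<mu>_def]
  have "r\<^sup>2 \<le> (dist x y)\<^sup>2" using assms(1,2) by (intro power_mono) auto
  then have \<mu>: "0 \<le> \<mu>" "\<mu> \<le> 1" "\<mu> * (dist x y)\<^sup>2 \<le> r\<^sup>2"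
    using assms(1,2) by (auto simp: \<mu>_def divide_le_eq_1)
  show "cball p1 r \<inter> cball p2 r \<subseteq> W x y r"
    unfolding W_def
  proof (intro subsetI CollectI)
    fix z w assume z: "z \<in> cball p1 r \<inter> cball p2 r" and w: "w \<in> cball x r \<inter> cball y (dist x y)"
    have "dist w (p1 + p2 - x) \<le> r"
      unfolding x'(1) using w by (intro half_moon_in_ball[OF \<mu>]) (auto simp: dist_commute)
    with w have "w \<in> cball x r \<inter> cball (p1 + p2 - x) r" by (simp add: dist_commute)
    with z have "dist z w \<le> r"
      by (intro rhombus_lenses_within_distance[OF _ x'(2) assms(3,4,6)]) simp_all
    then show "w \<in> cball z r" by simp
  qed
qed

end
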